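(* Let $I$ be a conditional indicator w.r.t. $\mathcal{H}$ whose domain $\mathbb{D}_I$ is $\mathcal{H}$-decomposable. The following are equivalent: (1) $I$ is regular; (2) $I(X1_H)=I(X)1_H$ for all $X\in\mathbb{D}_I$ and $H\in\mathcal{H}$; (3) $I(X1_H+Y1_{\Omega\setminus H})=I(X)1_H+I(Y)1_{\Omega\setminus H}$ for all $X,Y\in\mathbb{D}_I$ and $H\in\mathcal{H}$.
   Context: Let $(\Omega,\mathcal{F},\mathbb{P})$ be a probability space with $\mathcal{F}$ complete, and $\mathcal{H}\subseteq\mathcal{F}$ a complete sub-$\sigma$-algebra. $\overline{\mathbb{R}}=\mathbb{R}\cup\{\pm\infty\}$ with conventions $r\pm\infty=\pm\infty$, $\infty-\infty=0$, $\infty+\infty=\infty$, $0\times(\pm\infty)=0$; $\mathbb{L}^0(G,\mathcal{G})$ is the set of $\mathcal{G}$-measurable random variables a.s. valued in $G$. $\operatorname{ess\,sup}_{\mathcal{H}}(X)$ is the smallest $\mathcal{H}$-measurable random variable dominating $X$ a.s., $\operatorname{ess\,inf}_{\mathcal{H}}(X)=-\operatorname{ess\,sup}_{\mathcal{H}}(-X)$. A conditional indicator w.r.t. $\mathcal{H}$ is a map $I:\mathbb{D}_I\to\mathbb{L}^0(\overline{\mathbb{R}},\mathcal{H})$, $0\in\mathbb{D}_I\subseteq\mathbb{L}^0(\overline{\mathbb{R}},\mathcal{F})$, with $I(X)\in[\operatorname{ess\,inf}_{\mathcal{H}}(X),\operatorname{ess\,sup}_{\mathcal{H}}(X)]$ a.s.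 and $\mathbb{D}_I+\mathbb{L}^0(\overline{\mathbb{R}},\mathcal{H})\subseteq\mathbb{D}_I$. $\mathbb{D}_I$ is $\mathcal{H}$-decomposable if $X1_H+Y1_{\Omega\setminus H}\in\mathbb{D}_I$ for $X,Y\in\mathbb{D}_I$, $H\in\mathcal{H}$. $I$ is regular if $\mathbb{D}_I$ is $\mathcal{H}$-decomposable and for $X,Y\in\mathbb{D}_I$, $H\in\mathcal{H}$, $X1_H=Y1_H$ implies $I(X)1_H=I(Y)1_H$. *)

theory Defs
  imports "HOL-Probability.Probability"
begin

text \<open>Addition on extended reals with the paper's convention: infinity minus infinity is 0
  (Isabelle's built-in ereal addition instead gives infinity for that case).\<close>
definition eadd :: "ereal \<Rightarrow> ereal \<Rightarrow> ereal" where
  "eadd a b = (if (a = \<infinity> \<and> b = -\<infinity>) \<or> (a = -\<infinity> \<and> b = \<infinity>) then 0 else a + b)"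

definition cond_ess_sup :: "'a measure \<Rightarrow> 'a measure \<Rightarrow> ('a \<Rightarrow> ereal) \<Rightarrow> 'a \<Rightarrow> ereal" where
  "cond_ess_sup M N X = (SOME S. S \<in> borel_measurable N \<and> (AE \<omega> in M. X \<omega> \<le> S \<omega>) \<and>
      (\<forall>T \<in> borel_measurable N. (AE \<omega> in M. X \<omega> \<le> T \<omega>) \<longrightarrow> (AE \<omega> in M. S \<omega> \<le> T \<omega>)))"

definition cond_ess_inf :: "'a measure \<Rightarrow> 'a measure \<Rightarrow> ('a \<Rightarrow> ereal) \<Rightarrow> 'a \<Rightarrow> ereal" where
  "cond_ess_inf M N X = (\<lambda>\<omega>. - cond_ess_sup M N (\<lambda>\<omega>. - X \<omega>) \<omega>)"

text \<open>Conditional indicator with domain D. Random variables are functions; since the paper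
  works with L0 (a.s.-equivalence classes), we require D and I to respect a.s. equality.\<close>
definition cond_indicator ::
  "'a measure \<Rightarrow> 'a measure \<Rightarrow> ('a \<Rightarrow> ereal) set \<Rightarrow> (('a \<Rightarrow> ereal) \<Rightarrow> 'a \<Rightarrow> ereal) \<Rightarrow> bool" where
  "cond_indicator M N D I \<longleftrightarrow>
     (\<lambda>_. 0) \<in> D \<and> D \<subseteq> borel_measurable M \<and>
     (\<forall>X \<in> D. I X \<in> borel_measurable N \<and>
        (AE \<omega> in M. cond_ess_inf M N X \<omega> \<le> I X \<omega> \<and> I X \<omega> \<le> cond_ess_sup M N X \<omega>)) \<and>
     (\<forall>X \<in> D. \<forall>Z \<in> borel_measurable N. (\<lambda>\<omega>. eadd (X \<omega>) (Z \<omega>)) \<in> D) \<and>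
     (\<forall>X \<in> D. \<forall>Y \<in> borel_measurable M. (AE \<omega> in M. X \<omega> = Y \<omega>) \<longrightarrow>
        Y \<in> D \<and> (AE \<omega> in M. I X \<omega> = I Y \<omega>))"

definition decomposable :: "'a measure \<Rightarrow> 'a measure \<Rightarrow> ('a \<Rightarrow> ereal) set \<Rightarrow> bool" where
  "decomposable M N D \<longleftrightarrow>
     (\<forall>X \<in> D. \<forall>Y \<in> D. \<forall>H \<in> sets N.
        (\<lambda>\<omega>. eadd (X \<omega> * indicator H \<omega>) (Y \<omega> * indicator (space M - H) \<omega>)) \<in> D)"

definition regular_ci ::
  "'a measure \<Rightarrow> 'a measure \<Rightarrow> ('a \<Rightarrow> ereal) set \<Rightarrow> (('a \<Rightarrow> ereal) \<Rightarrow> 'a \<Rightarrow> ereal) \<Rightarrow> bool" where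
  "regular_ci M N D I \<longleftrightarrow> decomposable M N D \<and>
     (\<forall>X \<in> D. \<forall>Y \<in> D. \<forall>H \<in> sets N.
        (AE \<omega> in M. X \<omega> * indicator H \<omega> = Y \<omega> * indicator H \<omega>) \<longrightarrow>
        (AE \<omega> in M. I X \<omega> * indicator H \<omega> = I Y \<omega> * indicator H \<omega>))"

end

theory Submission
  imports Defs
begin

text \<open>Two observations drive the proof: pasting X on H with 0 off H is the restriction
  X 1_H, and I(0) = 0 a.s. because the conditional essential supremum and infimum of 0 vanish.
  Each property then yields the next by localising I on H and on its complement and pasting the
  two pieces together.\<close>

lemma AE_cond_ess_sup_zero: "AE w in M. cond_ess_sup M N (\<lambda>_. 0) w = 0"
proof -
  let ?P = "\<lambda>S. S \<in> borel_measurable N \<and> (AE w in M. (0::ereal) \<le> S w) \<and>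
      (\<forall>T \<in> borel_measurable N. (AE w in M. (0::ereal) \<le> T w) \<longrightarrow> (AE w in M. S w \<le> T w))"
  have "?P (cond_ess_sup M N (\<lambda>_. 0))"
    unfolding cond_ess_sup_def by (rule someI[of ?P "\<lambda>_. 0"]) simp
  then have "AE w in M. 0 \<le> cond_ess_sup M N (\<lambda>_. 0) w"
    and "AE w in M. cond_ess_sup M N (\<lambda>_. 0) w \<le> 0"
    by auto
  then show ?thesis by eventually_elim (rule order.antisym)
qed

context
  fixes M N :: "'a measure" and D :: "('a \<Rightarrow> ereal) set"
    and I :: "('a \<Rightarrow> ereal) \<Rightarrow> 'a \<Rightarrow> ereal"
  assumes sub: "subalgebra M N"
    and ci: "cond_indicator M N D I"
    and dec: "decomposable M N D"
begin

lemma zero_in_domain: "(\<lambda>_. 0) \<in> D"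
  using ci by (simp add: cond_indicator_def)

lemma AE_cond_indicator_zero: "AE w in M. I (\<lambda>_. 0) w = 0"
proof -
  have "cond_ess_inf M N (\<lambda>_. 0) = (\<lambda>w. - cond_ess_sup M N (\<lambda>_. 0) w)"
    by (simp add: cond_ess_inf_def)
  then have "AE w in M. - cond_ess_sup M N (\<lambda>_. 0) w \<le> I (\<lambda>_. 0) w \<and> I (\<lambda>_. 0) w \<le> cond_ess_sup M N (\<lambda>_. 0) w"
    using ci zero_in_domain unfolding cond_indicator_def by metis
  with AE_cond_ess_sup_zero[of M N] show ?thesis
    by eventually_elim (metis ereal_uminus_zero order.antisym)
qed

lemma cond_indicator_AE_cong:
  assumes "X \<in> D" "Y \<in> borel_measurable M" "AE w in M. X w = Y w"
  shows "AE w in M. I X w = I Y w"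
  using ci assms unfolding cond_indicator_def by blast

lemma compl_in_sets: "H \<in> sets N \<Longrightarrow> space M - H \<in> sets N"
  using sub sets.compl_sets by (metis subalgebra_def)

lemma restrict_in_domain:
  assumes "X \<in> D" "H \<in> sets N"
  shows "(\<lambda>w. X w * indicator H w) \<in> D"
proof -
  have "(\<lambda>w. eadd (X w * indicator H w) (0 * indicator (space M - H) w)) \<in> D"
    using dec[unfolded decomposable_def, rule_format, OF assms(1) zero_in_domain assms(2)] .
  then show ?thesis by (simp add: eadd_def)
qed

lemma restrict_measurable:
  assumes "X \<in> D" "H \<in> sets N"
  shows "(\<lambda>w. X w * indicator H w) \<in> borel_measurable M"
proof -
  have "X \<in> borel_measurable M" using assms(1) ci by (auto simp: cond_indicator_def)
  moreover have "H \<in> sets M" using assms(2) sub by (auto simp: subalgebra_def)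
  ultimately show ?thesis by measurable
qed

lemma regular_ci_imp_restrict:
  assumes "regular_ci M N D I" "X \<in> D" "H \<in> sets N"
  shows "AE w in M. I (\<lambda>w. X w * indicator H w) w = I X w * indicator H w"
proof -
  let ?XH = "\<lambda>w. X w * indicator H w"
  have local: "AE w in M. I ?XH w * indicator G w = I Y w * indicator G w"
    if "Y \<in> D" "G \<in> sets N" "\<And>w. ?XH w * indicator G w = Y w * indicator G w" for Y G
    using assms(1) restrict_in_domain[OF assms(2,3)] that unfolding regular_ci_def by simp
  have on_H: "AE w in M. I ?XH w * indicator H w = I X w * indicator H w"
    by (rule local[OF assms(2,3)]) (simp add: indicator_def)
  have off_H: "AE w in M. I ?XH w * indicator (space M - H) w = I (\<lambda>_. 0) w * indicator (space M - H) w"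
    by (rule local[OF zero_in_domain compl_in_sets[OF assms(3)]]) (simp add: indicator_def)
  from on_H off_H AE_cond_indicator_zero AE_space show ?thesis
    by eventually_elim (auto simp: indicator_def split: if_splits)
qed

lemma restrict_imp_regular_ci:
  assumes restrict: "\<forall>X \<in> D. \<forall>H \<in> sets N.
      AE w in M. I (\<lambda>w. X w * indicator H w) w = I X w * indicator H w"
  shows "regular_ci M N D I"
  unfolding regular_ci_def
proof (intro conjI dec ballI impI)
  fix X Y H assume X: "X \<in> D" and Y: "Y \<in> D" and H: "H \<in> sets N"
    and eq: "AE w in M. X w * indicator H w = Y w * indicator H w"
  have "AE w in M. I (\<lambda>w. X w * indicator H w) w = I (\<lambda>w. Y w * indicator H w) w"
    using cond_indicator_AE_cong[OF restrict_in_domain[OF X H] restrict_measurable[OF Y H] eq] .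
  with restrict[rule_format, OF X H] restrict[rule_format, OF Y H]
  show "AE w in M. I X w * indicator H w = I Y w * indicator H w"
    by eventually_elim simp
qed

lemma restrict_imp_paste:
  assumes restrict: "\<forall>X \<in> D. \<forall>H \<in> sets N.
      AE w in M. I (\<lambda>w. X w * indicator H w) w = I X w * indicator H w"
    and X: "X \<in> D" and Y: "Y \<in> D" and H: "H \<in> sets N"
  shows "AE w in M. I (\<lambda>w. eadd (X w * indicator H w) (Y w * indicator (space M - H) w)) w
           = eadd (I X w * indicator H w) (I Y w * indicator (space M - H) w)"
proof -
  define Z where "Z = (\<lambda>w. eadd (X w * indicator H w) (Y w * indicator (space M - H) w))"
  have Z: "Z \<in> D" using dec X Y H unfolding decomposable_def Z_def by blast
  have Z_on_H: "(\<lambda>w. Z w * indicator H w) = (\<lambda>w. X w * indicator H w)"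
    by (auto simp: Z_def eadd_def indicator_def)
  have on_H: "AE w in M. I Z w * indicator H w = I X w * indicator H w"
    using restrict[rule_format, OF Z H] restrict[rule_format, OF X H]
    unfolding Z_on_H by eventually_elim simp
  have Z_off_H: "(\<lambda>w. Z w * indicator (space M - H) w) = (\<lambda>w. Y w * indicator (space M - H) w)"
    by (auto simp: Z_def eadd_def indicator_def)
  have off_H: "AE w in M. I Z w * indicator (space M - H) w = I Y w * indicator (space M - H) w"
    using restrict[rule_format, OF Z compl_in_sets[OF H]] restrict[rule_format, OF Y compl_in_sets[OF H]]
    unfolding Z_off_H by eventually_elim simp
  have "AE w in M. I Z w = eadd (I X w * indicator H w) (I Y w * indicator (space M - H) w)"
    using on_H off_H AE_space
    by eventually_elim (auto simp: eadd_def indicator_def)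
  then show ?thesis unfolding Z_def .
qed

lemma paste_imp_restrict:
  assumes paste: "\<forall>X \<in> D. \<forall>Y \<in> D. \<forall>H \<in> sets N.
      AE w in M. I (\<lambda>w. eadd (X w * indicator H w) (Y w * indicator (space M - H) w)) w
        = eadd (I X w * indicator H w) (I Y w * indicator (space M - H) w)"
    and X: "X \<in> D" and H: "H \<in> sets N"
  shows "AE w in M. I (\<lambda>w. X w * indicator H w) w = I X w * indicator H w"
proof -
  have "(\<lambda>w. eadd (X w * indicator H w) (0 * indicator (space M - H) w)) = (\<lambda>w. X w * indicator H w)"
    by (simp add: eadd_def)
  with paste[rule_format, OF X zero_in_domain H] have
    "AE w in M. I (\<lambda>w. X w * indicator H w) w
       = eadd (I X w * indicator H w) (I (\<lambda>_. 0) w * indicator (space M - H) w)"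
    by simp
  with AE_cond_indicator_zero show ?thesis
    by eventually_elim (simp add: eadd_def indicator_def)
qed

end

theorem mainTheorem15:
  fixes M N :: "'a measure" and D :: "('a \<Rightarrow> ereal) set"
    and I :: "('a \<Rightarrow> ereal) \<Rightarrow> 'a \<Rightarrow> ereal"
  assumes "prob_space M" and "complete_measure M"
    and "subalgebra M N" and "\<forall>A \<in> null_sets M. A \<in> sets N"
    and "cond_indicator M N D I" and "decomposable M N D"
  shows "(regular_ci M N D I \<longleftrightarrow>
           (\<forall>X \<in> D. \<forall>H \<in> sets N.
              AE \<omega> in M. I (\<lambda>\<omega>. X \<omega> * indicator H \<omega>) \<omega> = I X \<omega> * indicator H \<omega>))
       \<and> ((\<forall>X \<in> D. \<forall>H \<in> sets N.
              AE \<omega> in M. I (\<lambda>\<omega>. X \<omega> * indicator H \<omega>) \<omega> = I X \<omega> * indicator H \<omega>) \<longleftrightarrow>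
          (\<forall>X \<in> D. \<forall>Y \<in> D. \<forall>H \<in> sets N.
              AE \<omega> in M. I (\<lambda>\<omega>. eadd (X \<omega> * indicator H \<omega>) (Y \<omega> * indicator (space M - H) \<omega>)) \<omega>
                = eadd (I X \<omega> * indicator H \<omega>) (I Y \<omega> * indicator (space M - H) \<omega>)))"
proof (intro conjI iffI ballI)
  show "regular_ci M N D I"
    if "\<forall>X \<in> D. \<forall>H \<in> sets N. AE \<omega> in M. I (\<lambda>\<omega>. X \<omega> * indicator H \<omega>) \<omega> = I X \<omega> * indicator H \<omega>"
    using restrict_imp_regular_ci[OF assms(3,5,6) that] .
qed (auto intro: regular_ci_imp_restrict[OF assms(3,5,6)] restrict_imp_paste[OF assms(3,5,6)]
  paste_imp_restrict[OF assms(3,5,6)])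

end
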